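(* Let $G$ be a digraph and $i\le 0\le j$ integers. Each of the following properties holds for $G$ if and only if it holds for $G^{[i,j]}$: the Taylor property; the $\operatorname{SD}(\wedge)$ property; having a $2$-semilattice polymorphism; having totally symmetric idempotent polymorphisms of all arities.
   Context: Digraphs are finite and loopless. For $G=(V,E)$, $G^{[i,j]}$ is the digraph on $\{i,\dots,-1\}\cup V\cup\{1,\dots,j\}$ (disjoint union) whose edges are: $u\to w$ for integers $u<w$ in $\{i,\dots,-1,1,\dots,j\}$; the edges of $E$; $u\to v$ for every integer $u<0$ and $v\in V$; $v\to u$ for every $v\in V$ and integer $u>0$. A polymorphism of arity $k$ is a map $f:V^k\to V$ with $(f(a_1,\dots,a_k),f(b_1,\dots,b_k))\in E$ whenever all $(a_i,b_i)\in E$. Weak NU: idempotent polymorphism $w$ of arity $n>1$ with $w(y,x,\dots,x)=w(x,y,x,\dots,x)=\dots=w(x,\dots,x,y)$. Taylor: has a weak NU polymorphism. $\operatorname{SD}(\wedge)$: a $3$-ary weak NU $w_1$ and a $4$-ary weak NU $w_2$ with $w_1(y,x,x)=w_2(y,x,x,x)$. A $2$-semilattice polymorphism is a binary idempotent polymorphism $\cdot$ with $x\cdot y=y\cdot x$ and $x\cdot(x\cdot y)=x\cdot y$. A totally symmetric idempotent polymorphism of arity $n$ is an idempotent $n$-ary polymorphism $p$ with $p(x_1,\dots,x_n)=p(y_1,\dots,y_n)$ whenever $\{x_1,\dots,x_n\}=\{y_1,\dots,y_n\}$. *)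

theory Defs
  imports Main
begin

definition digraph :: "'a set \<Rightarrow> ('a \<times> 'a) set \<Rightarrow> bool" where
  "digraph V E \<longleftrightarrow> finite V \<and> E \<subseteq> V \<times> V \<and> (\<forall>v. (v, v) \<notin> E)"

definition int_part :: "int \<Rightarrow> int \<Rightarrow> int set" where
  "int_part i j = {i..-1} \<union> {1..j}"

text \<open>G^[i,j]: disjoint union realised on the sum type int + 'a.\<close>
definition ext_V :: "int \<Rightarrow> int \<Rightarrow> 'a set \<Rightarrow> (int + 'a) set" where
  "ext_V i j V = Inl ` int_part i j \<union> Inr ` V"

definition ext_E :: "int \<Rightarrow> int \<Rightarrow> 'a set \<Rightarrow> ('a \<times> 'a) set \<Rightarrow> ((int + 'a) \<times> (int + 'a)) set" where
  "ext_E i j V E =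
     {(Inl u, Inl w) | u w. u \<in> int_part i j \<and> w \<in> int_part i j \<and> u < w}
   \<union> {(Inr a, Inr b) | a b. (a, b) \<in> E}
   \<union> {(Inl u, Inr v) | u v. u \<in> int_part i j \<and> u < 0 \<and> v \<in> V}
   \<union> {(Inr v, Inl u) | v u. v \<in> V \<and> u \<in> int_part i j \<and> u > 0}"

text \<open>k-ary operations are functions on lists; only their values on lists of length k
  over V matter.\<close>
definition polymorphism :: "'a set \<Rightarrow> ('a \<times> 'a) set \<Rightarrow> nat \<Rightarrow> ('a list \<Rightarrow> 'a) \<Rightarrow> bool" where
  "polymorphism V E k f \<longleftrightarrow>
     (\<forall>xs. length xs = k \<and> set xs \<subseteq> V \<longrightarrow> f xs \<in> V) \<and>
     (\<forall>xs ys. length xs = k \<and> length ys = k \<and> set xs \<subseteq> V \<and> set ys \<subseteq> V \<and>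
        (\<forall>l<k. (xs ! l, ys ! l) \<in> E) \<longrightarrow> (f xs, f ys) \<in> E)"

definition idempotent_op :: "'a set \<Rightarrow> nat \<Rightarrow> ('a list \<Rightarrow> 'a) \<Rightarrow> bool" where
  "idempotent_op V k f \<longleftrightarrow> (\<forall>x\<in>V. f (replicate k x) = x)"

definition weak_nu :: "'a set \<Rightarrow> ('a \<times> 'a) set \<Rightarrow> nat \<Rightarrow> ('a list \<Rightarrow> 'a) \<Rightarrow> bool" where
  "weak_nu V E n w \<longleftrightarrow> n > 1 \<and> polymorphism V E n w \<and> idempotent_op V n w \<and>
     (\<forall>x\<in>V. \<forall>y\<in>V. \<forall>p<n. \<forall>q<n.
        w ((replicate n x)[p := y]) = w ((replicate n x)[q := y]))"

definition taylor :: "'a set \<Rightarrow> ('a \<times> 'a) set \<Rightarrow> bool" where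
  "taylor V E \<longleftrightarrow> (\<exists>n w. weak_nu V E n w)"

definition SD_meet :: "'a set \<Rightarrow> ('a \<times> 'a) set \<Rightarrow> bool" where
  "SD_meet V E \<longleftrightarrow> (\<exists>w1 w2. weak_nu V E 3 w1 \<and> weak_nu V E 4 w2 \<and>
     (\<forall>x\<in>V. \<forall>y\<in>V. w1 [y, x, x] = w2 [y, x, x, x]))"

definition two_semilattice_pol :: "'a set \<Rightarrow> ('a \<times> 'a) set \<Rightarrow> ('a list \<Rightarrow> 'a) \<Rightarrow> bool" where
  "two_semilattice_pol V E m \<longleftrightarrow> polymorphism V E 2 m \<and> idempotent_op V 2 m \<and>
     (\<forall>x\<in>V. \<forall>y\<in>V. m [x, y] = m [y, x] \<and> m [x, m [x, y]] = m [x, y])"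

definition has_2_semilattice :: "'a set \<Rightarrow> ('a \<times> 'a) set \<Rightarrow> bool" where
  "has_2_semilattice V E \<longleftrightarrow> (\<exists>m. two_semilattice_pol V E m)"

definition tsi_pol :: "'a set \<Rightarrow> ('a \<times> 'a) set \<Rightarrow> nat \<Rightarrow> ('a list \<Rightarrow> 'a) \<Rightarrow> bool" where
  "tsi_pol V E n p \<longleftrightarrow> polymorphism V E n p \<and> idempotent_op V n p \<and>
     (\<forall>xs ys. length xs = n \<and> length ys = n \<and> set xs \<subseteq> V \<and> set ys \<subseteq> V \<and>
        set xs = set ys \<longrightarrow> p xs = p ys)"

definition has_all_tsi :: "'a set \<Rightarrow> ('a \<times> 'a) set \<Rightarrow> bool" where
  "has_all_tsi V E \<longleftrightarrow> (\<forall>n\<ge>1. \<exists>p. tsi_pol V E n p)"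

end

theory Submission
  imports Defs
begin

text \<open>
  An idempotent polymorphism g of G extends to G^[i,j]: on a tuple containing an integer vertex
  take its least negative entry if there is one and otherwise its greatest positive entry, on a
  tuple from V apply g. Integer vertices are ordered by the edges, with V in the middle: an edge
  into a negative vertex comes from a smaller negative one, an edge out of a positive vertex goes
  to a larger positive one. This forces the chosen entries of two adjacent tuples to be adjacent,
  so the extension is a polymorphism. Off V^k its value is an element of the tuple determined by
  the set of entries alone, so it inherits every identity whose two sides use the same variables,
  as all the identities in question do.

  Conversely, an idempotent polymorphism f of G^[i,j] maps V^k into V: were f(v) an integer u,
  the constant tuple (u,...,u), adjacent to v in one direction, would give the loop
  f(u,...,u) = u \<rightarrow> u. So f restricts to a polymorphism of G satisfying the same identities.
\<close>

lemma polymorphism_list_all2: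
  "polymorphism V E k f \<longleftrightarrow>
     (\<forall>xs. length xs = k \<and> set xs \<subseteq> V \<longrightarrow> f xs \<in> V) \<and>
     (\<forall>xs ys. length xs = k \<and> set xs \<subseteq> V \<and> set ys \<subseteq> V \<and> list_all2 (\<lambda>x y. (x, y) \<in> E) xs ys
        \<longrightarrow> (f xs, f ys) \<in> E)"
  unfolding polymorphism_def list_all2_conv_all_nth by auto

lemma set_replicate_update:
  assumes "1 < n" "p < n"
  shows "set ((replicate n x)[p := y]) = {x, y}"
proof -
  define q where "q = (if p = 0 then 1 else (0::nat))"
  have "q < n" "q \<noteq> p" using assms by (auto simp: q_def)
  then have "x \<in> set ((replicate n x)[p := y])"
    by (metis length_list_update length_replicate nth_list_update_neq nth_mem nth_replicate)
  moreover have "y \<in> set ((replicate n x)[p := y])" using assms(2) by (simp add: set_update_memI)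
  moreover have "set ((replicate n x)[p := y]) \<subseteq> insert y (set (replicate n x))"
    by (rule set_update_subset_insert)
  ultimately show ?thesis by auto
qed

section \<open>The digraph G^[i,j]\<close>

lemma ext_V_Inl [simp]: "Inl u \<in> ext_V i j V \<longleftrightarrow> u \<in> int_part i j"
  by (auto simp: ext_V_def)

lemma ext_V_Inr [simp]: "Inr v \<in> ext_V i j V \<longleftrightarrow> v \<in> V"
  by (auto simp: ext_V_def)

lemma Inr_image_subset_ext_V [simp]: "Inr ` A \<subseteq> ext_V i j V \<longleftrightarrow> A \<subseteq> V"
  by auto

lemma ext_E_Inl_Inl [simp]:
  "(Inl u, Inl w) \<in> ext_E i j V E \<longleftrightarrow> u \<in> int_part i j \<and> w \<in> int_part i j \<and> u < w"
  by (auto simp: ext_E_def)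

lemma ext_E_Inr_Inr [simp]: "(Inr a, Inr b) \<in> ext_E i j V E \<longleftrightarrow> (a, b) \<in> E"
  by (auto simp: ext_E_def)

lemma ext_E_Inl_Inr [simp]:
  "(Inl u, Inr v) \<in> ext_E i j V E \<longleftrightarrow> u \<in> int_part i j \<and> u < 0 \<and> v \<in> V"
  by (auto simp: ext_E_def)

lemma ext_E_Inr_Inl [simp]:
  "(Inr v, Inl u) \<in> ext_E i j V E \<longleftrightarrow> v \<in> V \<and> u \<in> int_part i j \<and> 0 < u"
  by (auto simp: ext_E_def)

lemma int_part_nonzero: "u \<in> int_part i j \<Longrightarrow> u \<noteq> 0"
  by (auto simp: int_part_def)

lemma ext_E_into_negative: "(x, Inl u) \<in> ext_E i j V E \<Longrightarrow> u < 0 \<Longrightarrow> \<exists>t<u. x = Inl t"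
  by (cases x) auto

lemma ext_E_from_positive: "(Inl u, y) \<in> ext_E i j V E \<Longrightarrow> 0 < u \<Longrightarrow> \<exists>t>u. y = Inl t"
  by (cases y) auto

definition height :: "int + 'a \<Rightarrow> int" where
  "height v = (case v of Inl u \<Rightarrow> u | Inr _ \<Rightarrow> 0)"

lemma height_Inl [simp]: "height (Inl u) = u" and height_Inr [simp]: "height (Inr a) = 0"
  by (simp_all add: height_def)

lemma ext_E_iff_height:
  "p \<in> ext_V i j V \<Longrightarrow> q \<in> ext_V i j V \<Longrightarrow> isl p \<or> isl q \<Longrightarrow>
     (p, q) \<in> ext_E i j V E \<longleftrightarrow> height p < height q"
  by (cases p; cases q) auto

section \<open>Extending polymorphisms of G\<close>

definition int_labels :: "('b + 'a) set \<Rightarrow> 'b set" where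
  "int_labels S = Inl -` S"

lemma int_labels_empty [simp]: "int_labels {} = {}"
  by (simp add: int_labels_def)

lemma int_labels_insert_Inl [simp]: "int_labels (insert (Inl u) S) = insert u (int_labels S)"
  by (auto simp: int_labels_def)

lemma int_labels_insert_Inr [simp]: "int_labels (insert (Inr a) S) = int_labels S"
  by (auto simp: int_labels_def)

lemma finite_int_labels: "finite S \<Longrightarrow> finite (int_labels S)"
  unfolding int_labels_def by (rule finite_vimageI) (simp_all add: inj_on_def)

lemma int_labels_Inr_image [simp]: "int_labels (Inr ` A) = {}"
  by (auto simp: int_labels_def)

lemma int_labels_empty_imp_map_Inr:
  assumes "int_labels (set xs) = {}"
  shows "xs = map Inr (map projr xs)"
proof -
  have "Inr (projr x) = x" if "x \<in> set xs" for x
    using assms that by (cases x) (auto simp: int_labels_def)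
  then show ?thesis unfolding map_map by (intro map_idI[symmetric]) simp
qed

lemma int_labels_ext_V: "S \<subseteq> ext_V i j V \<Longrightarrow> int_labels S \<subseteq> int_part i j"
  by (auto simp: int_labels_def)

lemma Inr_pair_or_labelled: "(\<exists>a b. x = Inr a \<and> y = Inr b) \<or> int_labels {x, y} \<noteq> {}"
  by (cases x; cases y) simp_all

definition extreme_label :: "int set \<Rightarrow> int" where
  "extreme_label N = (if Min N < 0 then Min N else Max N)"

lemma extreme_label_mem: "finite N \<Longrightarrow> N \<noteq> {} \<Longrightarrow> extreme_label N \<in> N"
  by (simp add: extreme_label_def)

lemma extreme_label_singleton [simp]: "extreme_label {u} = u"
  by (simp add: extreme_label_def)

lemma extreme_label_pos:
  assumes "finite N" "N \<noteq> {}" "0 \<notin> N" "\<not> Min N < 0"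
  shows "0 < extreme_label N"
proof -
  have "extreme_label N = Max N" using assms(4) by (simp add: extreme_label_def)
  moreover have "Max N \<in> N" "Min N \<le> Max N" using assms(1,2) by simp_all
  ultimately show ?thesis using assms(3,4) by (metis linorder_neqE_linordered_idom not_le order_trans)
qed

lemma extreme_label_subset:
  assumes "finite N" "extreme_label N \<in> M" "M \<subseteq> N"
  shows "extreme_label M = extreme_label N"
proof -
  have M: "finite M" "M \<noteq> {}" using assms finite_subset by auto
  have "Min N \<le> Min M" "Max M \<le> Max N"
    using assms M by (auto intro!: Min_antimono Max_mono)
  show ?thesis
  proof (cases "Min N < 0")
    case True
    then have "Min M = Min N"
      using assms(2) M Min_le \<open>Min N \<le> Min M\<close> by (simp add: extreme_label_def antisym)
    then show ?thesis using True by (simp add: extreme_label_def)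
  next
    case False
    then have "Max M = Max N"
      using assms(2) M Max_ge[of M] \<open>Max M \<le> Max N\<close> by (simp add: extreme_label_def antisym)
    moreover have "\<not> Min M < 0" using False \<open>Min N \<le> Min M\<close> by simp
    ultimately show ?thesis using False by (simp add: extreme_label_def)
  qed
qed

definition ext_op :: "('a list \<Rightarrow> 'a) \<Rightarrow> (int + 'a) list \<Rightarrow> int + 'a" where
  "ext_op g xs =
     (if int_labels (set xs) = {} then Inr (g (map projr xs))
      else Inl (extreme_label (int_labels (set xs))))"

lemma ext_op_map_Inr [simp]: "ext_op g (map Inr zs) = Inr (g zs)"
  by (simp add: ext_op_def image_set[symmetric] comp_def)

lemma ext_op_labelled:
  "int_labels (set xs) \<noteq> {} \<Longrightarrow> ext_op g xs = Inl (extreme_label (int_labels (set xs)))"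
  by (simp add: ext_op_def)

lemma ext_op_set_eq:
  "set xs = set ys \<Longrightarrow> int_labels (set xs) \<noteq> {} \<Longrightarrow> ext_op g xs = ext_op h ys"
  by (simp add: ext_op_def)

lemma ext_op_unlabelled:
  "int_labels (set xs) = {} \<Longrightarrow> \<exists>zs. xs = map Inr zs \<and> ext_op g xs = Inr (g zs)"
  using int_labels_empty_imp_map_Inr ext_op_map_Inr by metis

lemma ext_op_mem:
  assumes "polymorphism V E k g" "length xs = k" "set xs \<subseteq> ext_V i j V"
  shows "ext_op g xs \<in> ext_V i j V"
proof (cases "int_labels (set xs) = {}")
  case True
  then obtain zs where zs: "xs = map Inr zs" "ext_op g xs = Inr (g zs)"
    using ext_op_unlabelled by blast
  then have "length zs = k" "set zs \<subseteq> V" using assms(2,3) by auto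
  then have "g zs \<in> V" using assms(1) unfolding polymorphism_def by blast
  then show ?thesis using zs by simp
next
  case False
  then have "extreme_label (int_labels (set xs)) \<in> int_labels (set xs)"
    by (simp add: extreme_label_mem finite_int_labels)
  then have "ext_op g xs \<in> set xs"
    using False by (simp add: ext_op_labelled int_labels_def)
  then show ?thesis using assms(3) by blast
qed

lemma Min_int_labels_decreases:
  assumes edges: "list_all2 (\<lambda>x y. (x, y) \<in> ext_E i j V E) xs ys"
    and "int_labels (set ys) \<noteq> {}" "Min (int_labels (set ys)) < 0"
  shows "int_labels (set xs) \<noteq> {} \<and> Min (int_labels (set xs)) < Min (int_labels (set ys))"
proof -
  let ?u = "Min (int_labels (set ys))"
  have "?u \<in> int_labels (set ys)" using assms(2) by (simp add: finite_int_labels)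
  then obtain l where l: "l < length ys" "ys ! l = Inl ?u"
    by (auto simp: int_labels_def in_set_conv_nth)
  then have "(xs ! l, Inl ?u) \<in> ext_E i j V E" using edges list_all2_nthD2 by fastforce
  then obtain t where "t < ?u" "xs ! l = Inl t" using ext_E_into_negative assms(3) by blast
  moreover have "l < length xs" using l edges list_all2_lengthD by metis
  ultimately have "t \<in> int_labels (set xs)" "t < ?u" by (metis int_labels_def nth_mem vimageI)+
  then show ?thesis using Min_le[OF finite_int_labels] by fastforce
qed

lemma Max_int_labels_increases:
  assumes edges: "list_all2 (\<lambda>x y. (x, y) \<in> ext_E i j V E) xs ys"
    and "int_labels (set xs) \<noteq> {}" "0 < Max (int_labels (set xs))"
  shows "int_labels (set ys) \<noteq> {} \<and> Max (int_labels (set xs)) < Max (int_labels (set ys))"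
proof -
  let ?u = "Max (int_labels (set xs))"
  have "?u \<in> int_labels (set xs)" using assms(2) by (simp add: finite_int_labels)
  then obtain l where l: "l < length xs" "xs ! l = Inl ?u"
    by (auto simp: int_labels_def in_set_conv_nth)
  then have "(Inl ?u, ys ! l) \<in> ext_E i j V E" using edges list_all2_nthD by fastforce
  then obtain t where "?u < t" "ys ! l = Inl t" using ext_E_from_positive assms(3) by blast
  moreover have "l < length ys" using l edges list_all2_lengthD by metis
  ultimately have "t \<in> int_labels (set ys)" "?u < t" by (metis int_labels_def nth_mem vimageI)+
  then show ?thesis using Max_ge[OF finite_int_labels] by fastforce
qed

lemma ext_op_Inl_label:
  assumes "ext_op g xs = Inl v"
  shows "v \<in> int_labels (set xs)"
proof -
  have "int_labels (set xs) \<noteq> {}" "v = extreme_label (int_labels (set xs))"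
    using assms by (simp_all add: ext_op_def split: if_splits)
  then show ?thesis by (simp add: extreme_label_mem finite_int_labels)
qed

lemma height_ext_op:
  "height (ext_op g xs) =
     (if int_labels (set xs) = {} then 0 else extreme_label (int_labels (set xs)))"
  by (simp add: ext_op_def)

lemma height_ext_op_increases:
  assumes xs: "set xs \<subseteq> ext_V i j V" and ys: "set ys \<subseteq> ext_V i j V"
    and edges: "list_all2 (\<lambda>x y. (x, y) \<in> ext_E i j V E) xs ys"
    and labelled: "int_labels (set xs) \<noteq> {} \<or> int_labels (set ys) \<noteq> {}"
  shows "height (ext_op g xs) < height (ext_op h ys)"
proof -
  define Nx Ny where "Nx = int_labels (set xs)" and "Ny = int_labels (set ys)"
  have fin: "finite Nx" "finite Ny" by (simp_all add: Nx_def Ny_def finite_int_labels)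
  have nonzero: "0 \<notin> Nx" "0 \<notin> Ny"
    using int_labels_ext_V[OF xs] int_labels_ext_V[OF ys] int_part_nonzero
    unfolding Nx_def Ny_def by blast+
  consider (neg_y) "Ny \<noteq> {}" "Min Ny < 0"
    | (neg_x) "Nx \<noteq> {}" "Min Nx < 0" "Ny = {} \<or> 0 \<le> Min Ny"
    | (pos_x) "Nx \<noteq> {}" "0 \<le> Min Nx" "Ny = {} \<or> 0 \<le> Min Ny"
    | (pos_y) "Nx = {}" "Ny \<noteq> {}" "0 \<le> Min Ny"
    using labelled unfolding Nx_def Ny_def by fastforce
  then show ?thesis
  proof cases
    case neg_y
    then have "Nx \<noteq> {}" "Min Nx < Min Ny"
      using Min_int_labels_decreases[OF edges] unfolding Nx_def Ny_def by auto
    then show ?thesis using neg_y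
      by (simp add: height_ext_op extreme_label_def Nx_def[symmetric] Ny_def[symmetric])
  next
    case neg_x
    have "0 \<le> height (ext_op h ys)"
      using neg_x(3) extreme_label_pos[OF fin(2) _ nonzero(2)]
      by (cases "Ny = {}") (simp_all add: height_ext_op Ny_def[symmetric] less_imp_le)
    then show ?thesis using neg_x
      by (simp add: height_ext_op extreme_label_def Nx_def[symmetric])
  next
    case pos_x
    have "0 < extreme_label Nx"
      by (rule extreme_label_pos[OF fin(1) pos_x(1) nonzero(1)]) (use pos_x(2) in linarith)
    then have "0 < Max Nx" using pos_x(2) by (simp add: extreme_label_def)
    then have "Ny \<noteq> {}" "Max Nx < Max Ny"
      using Max_int_labels_increases[OF edges] pos_x(1) unfolding Nx_def Ny_def by auto
    then show ?thesis using pos_x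
      by (simp add: height_ext_op extreme_label_def Nx_def[symmetric] Ny_def[symmetric])
  next
    case pos_y
    have "0 < extreme_label Ny"
      by (rule extreme_label_pos[OF fin(2) pos_y(2) nonzero(2)]) (use pos_y(3) in linarith)
    then show ?thesis using pos_y
      by (simp add: height_ext_op Nx_def[symmetric] Ny_def[symmetric])
  qed
qed

lemma ext_op_edge:
  assumes g: "polymorphism V E k g"
    and len: "length xs = k" and xs: "set xs \<subseteq> ext_V i j V" and ys: "set ys \<subseteq> ext_V i j V"
    and edges: "list_all2 (\<lambda>x y. (x, y) \<in> ext_E i j V E) xs ys"
  shows "(ext_op g xs, ext_op g ys) \<in> ext_E i j V E"
proof (cases "int_labels (set xs) = {} \<and> int_labels (set ys) = {}")
  case True
  then obtain zs zs' where "xs = map Inr zs" "ext_op g xs = Inr (g zs)"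
    and "ys = map Inr zs'" "ext_op g ys = Inr (g zs')"
    using ext_op_unlabelled by metis
  then show ?thesis
    using g len xs ys edges
    by (auto simp: polymorphism_list_all2 list_all2_map1 list_all2_map2)
next
  case False
  have "length ys = k" using edges len list_all2_lengthD by force
  then have "ext_op g xs \<in> ext_V i j V" "ext_op g ys \<in> ext_V i j V"
    using ext_op_mem[OF g] len xs ys by blast+
  moreover have "isl (ext_op g xs) \<or> isl (ext_op g ys)"
    using False by (auto simp: ext_op_def)
  ultimately show ?thesis
    using ext_E_iff_height height_ext_op_increases[OF xs ys edges] False by blast
qed

lemma ext_op_polymorphism:
  assumes "polymorphism V E k g"
  shows "polymorphism (ext_V i j V) (ext_E i j V E) k (ext_op g)"
  unfolding polymorphism_list_all2
proof (intro conjI allI impI)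
  show "ext_op g xs \<in> ext_V i j V" if "length xs = k \<and> set xs \<subseteq> ext_V i j V" for xs
    using ext_op_mem[OF assms] that by blast
  show "(ext_op g xs, ext_op g ys) \<in> ext_E i j V E"
    if "length xs = k \<and> set xs \<subseteq> ext_V i j V \<and> set ys \<subseteq> ext_V i j V \<and>
        list_all2 (\<lambda>x y. (x, y) \<in> ext_E i j V E) xs ys" for xs ys
    using ext_op_edge[OF assms] that by blast
qed

lemma ext_op_idempotent:
  assumes "idempotent_op V k g" "1 \<le> k"
  shows "idempotent_op (ext_V i j V) k (ext_op g)"
  unfolding idempotent_op_def
proof
  fix x assume x: "x \<in> ext_V i j V"
  show "ext_op g (replicate k x) = x"
  proof (cases x)
    case (Inl u)
    have "set (replicate k x) = {x}" using assms(2) by simp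
    then have "int_labels (set (replicate k x)) = {u}" using Inl by simp
    then show ?thesis using Inl by (simp add: ext_op_labelled)
  next
    case (Inr a)
    then have "ext_op g (replicate k x) = Inr (g (replicate k a))"
      by (metis ext_op_map_Inr map_replicate)
    then show ?thesis using assms(1) x Inr by (simp add: idempotent_op_def)
  qed
qed

lemma weak_nu_ext_op:
  assumes "weak_nu V E n w"
  shows "weak_nu (ext_V i j V) (ext_E i j V E) n (ext_op w)"
proof -
  have n: "1 < n" and w: "polymorphism V E n w" "idempotent_op V n w"
    and w_nu: "\<forall>a\<in>V. \<forall>b\<in>V. \<forall>p<n. \<forall>q<n. w ((replicate n a)[p := b]) = w ((replicate n a)[q := b])"
    using assms unfolding weak_nu_def by blast+
  have "\<forall>x\<in>ext_V i j V. \<forall>y\<in>ext_V i j V. \<forall>p<n. \<forall>q<n.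
          ext_op w ((replicate n x)[p := y]) = ext_op w ((replicate n x)[q := y])"
  proof (intro ballI allI impI)
    fix x y p q assume x: "x \<in> ext_V i j V" and y: "y \<in> ext_V i j V" and pq: "p < n" "q < n"
    show "ext_op w ((replicate n x)[p := y]) = ext_op w ((replicate n x)[q := y])"
      using Inr_pair_or_labelled[of x y]
    proof
      assume "\<exists>a b. x = Inr a \<and> y = Inr b"
      then obtain a b where ab: "x = Inr a" "y = Inr b" "a \<in> V" "b \<in> V" using x y by auto
      have "(replicate n x)[r := y] = map Inr ((replicate n a)[r := b])" for r
        using ab by (simp add: map_update)
      moreover have "w ((replicate n a)[p := b]) = w ((replicate n a)[q := b])"
        using w_nu ab(3,4) pq by blast
      ultimately show ?thesis by simp
    next
      assume "int_labels {x, y} \<noteq> {}"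
      then show ?thesis using n pq by (intro ext_op_set_eq) (simp_all add: set_replicate_update)
    qed
  qed
  moreover have "idempotent_op (ext_V i j V) n (ext_op w)" using ext_op_idempotent[OF w(2)] n by simp
  ultimately show ?thesis using n ext_op_polymorphism[OF w(1)] unfolding weak_nu_def by blast
qed

lemma SD_meet_ext:
  assumes "SD_meet V E"
  shows "SD_meet (ext_V i j V) (ext_E i j V E)"
proof -
  obtain w1 w2 where w: "weak_nu V E 3 w1" "weak_nu V E 4 w2"
    and w_eq: "\<forall>x\<in>V. \<forall>y\<in>V. w1 [y, x, x] = w2 [y, x, x, x]"
    using assms unfolding SD_meet_def by blast
  have "\<forall>x\<in>ext_V i j V. \<forall>y\<in>ext_V i j V. ext_op w1 [y, x, x] = ext_op w2 [y, x, x, x]"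
  proof (intro ballI)
    fix x y assume x: "x \<in> ext_V i j V" and y: "y \<in> ext_V i j V"
    show "ext_op w1 [y, x, x] = ext_op w2 [y, x, x, x]"
      using Inr_pair_or_labelled[of x y]
    proof
      assume "\<exists>a b. x = Inr a \<and> y = Inr b"
      then obtain a b where ab: "x = Inr a" "y = Inr b" "a \<in> V" "b \<in> V" using x y by auto
      then show ?thesis
        using w_eq ext_op_map_Inr[of w1 "[b, a, a]"] ext_op_map_Inr[of w2 "[b, a, a, a]"] by simp
    next
      assume "int_labels {x, y} \<noteq> {}"
      then show ?thesis by (intro ext_op_set_eq) (simp_all add: insert_commute)
    qed
  qed
  then show ?thesis using weak_nu_ext_op[OF w(1)] weak_nu_ext_op[OF w(2)] unfolding SD_meet_def by blast
qed

lemma two_semilattice_pol_ext_op: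
  assumes "two_semilattice_pol V E m"
  shows "two_semilattice_pol (ext_V i j V) (ext_E i j V E) (ext_op m)"
proof -
  have m: "polymorphism V E 2 m" "idempotent_op V 2 m"
    and m_eq: "\<forall>x\<in>V. \<forall>y\<in>V. m [x, y] = m [y, x] \<and> m [x, m [x, y]] = m [x, y]"
    using assms unfolding two_semilattice_pol_def by blast+
  have "\<forall>x\<in>ext_V i j V. \<forall>y\<in>ext_V i j V.
          ext_op m [x, y] = ext_op m [y, x] \<and> ext_op m [x, ext_op m [x, y]] = ext_op m [x, y]"
  proof (intro ballI)
    fix x y assume x: "x \<in> ext_V i j V" and y: "y \<in> ext_V i j V"
    show "ext_op m [x, y] = ext_op m [y, x] \<and> ext_op m [x, ext_op m [x, y]] = ext_op m [x, y]"
      using Inr_pair_or_labelled[of x y]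
    proof
      assume "\<exists>a b. x = Inr a \<and> y = Inr b"
      then obtain a b where ab: "x = Inr a" "y = Inr b" "a \<in> V" "b \<in> V" using x y by auto
      have xy: "ext_op m [x, y] = Inr (m [a, b])" and yx: "ext_op m [y, x] = Inr (m [b, a])"
        and x_xy: "ext_op m [x, Inr (m [a, b])] = Inr (m [a, m [a, b]])"
        using ab(1,2) ext_op_map_Inr[of m "[a, b]"] ext_op_map_Inr[of m "[b, a]"]
          ext_op_map_Inr[of m "[a, m [a, b]]"] by simp_all
      have "m [a, b] = m [b, a]" "m [a, m [a, b]] = m [a, b]" using m_eq ab(3,4) by blast+
      then show ?thesis unfolding xy yx x_xy by simp
    next
      assume labelled: "int_labels {x, y} \<noteq> {}"
      define u where "u = extreme_label (int_labels {x, y})"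
      have xy: "ext_op m [x, y] = Inl u" using labelled by (simp add: ext_op_labelled u_def)
      then have "u \<in> int_labels {x, y}" using ext_op_Inl_label by fastforce
      then have sub: "int_labels {x, Inl u} \<subseteq> int_labels {x, y}"
        and u: "u \<in> int_labels {x, Inl u}"
        by (auto simp: int_labels_def)
      have "extreme_label (int_labels {x, Inl u}) = u"
        using extreme_label_subset[of "int_labels {x, y}" "int_labels {x, Inl u}"]
          finite_int_labels[of "{x, y}"] sub u u_def by simp
      moreover have "int_labels (set [x, Inl u]) \<noteq> {}" using u by auto
      ultimately have "ext_op m [x, ext_op m [x, y]] = ext_op m [x, y]"
        using xy ext_op_labelled by fastforce
      moreover have "ext_op m [x, y] = ext_op m [y, x]"
        using labelled by (intro ext_op_set_eq) (simp_all add: insert_commute)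
      ultimately show ?thesis by blast
    qed
  qed
  moreover have "idempotent_op (ext_V i j V) 2 (ext_op m)" using ext_op_idempotent[OF m(2)] by simp
  ultimately show ?thesis using ext_op_polymorphism[OF m(1)] unfolding two_semilattice_pol_def by blast
qed

lemma tsi_pol_ext_op:
  assumes "tsi_pol V E n p" "1 \<le> n"
  shows "tsi_pol (ext_V i j V) (ext_E i j V E) n (ext_op p)"
proof -
  have p: "polymorphism V E n p" "idempotent_op V n p"
    and p_sym: "\<forall>zs zs'. length zs = n \<and> length zs' = n \<and> set zs \<subseteq> V \<and> set zs' \<subseteq> V \<and>
                  set zs = set zs' \<longrightarrow> p zs = p zs'"
    using assms unfolding tsi_pol_def by blast+
  have "\<forall>xs ys. length xs = n \<and> length ys = n \<and> set xs \<subseteq> ext_V i j V \<and> set ys \<subseteq> ext_V i j V \<and>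
          set xs = set ys \<longrightarrow> ext_op p xs = ext_op p ys"
  proof (intro allI impI)
    fix xs ys :: "(int + 'a) list"
    assume A: "length xs = n \<and> length ys = n \<and> set xs \<subseteq> ext_V i j V \<and> set ys \<subseteq> ext_V i j V \<and>
          set xs = set ys"
    show "ext_op p xs = ext_op p ys"
    proof (cases "int_labels (set xs) = {}")
      case True
      then obtain zs zs' where zs: "xs = map Inr zs" "ys = map Inr zs'"
        using int_labels_empty_imp_map_Inr A by (metis (no_types))
      then have "set zs = set zs'" using A by (simp add: inj_image_eq_iff)
      moreover have "length zs = n" "length zs' = n" "set zs \<subseteq> V" "set zs' \<subseteq> V"
        using A zs by auto
      ultimately have "p zs = p zs'" using p_sym by blast
      then show ?thesis using zs by simp
    next
      case False
      then show ?thesis using A by (intro ext_op_set_eq) simp_all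
    qed
  qed
  moreover have "idempotent_op (ext_V i j V) n (ext_op p)" using ext_op_idempotent[OF p(2) assms(2)] .
  ultimately show ?thesis using ext_op_polymorphism[OF p(1)] unfolding tsi_pol_def by blast
qed

section \<open>Restricting polymorphisms of G^[i,j]\<close>

definition restrict_op :: "((int + 'a) list \<Rightarrow> int + 'a) \<Rightarrow> 'a list \<Rightarrow> 'a" where
  "restrict_op f zs = projr (f (map Inr zs))"

lemma idempotent_polymorphism_ext_map_Inr:
  assumes f: "polymorphism (ext_V i j V) (ext_E i j V E) k f"
    and idem: "idempotent_op (ext_V i j V) k f"
    and zs: "length zs = k" "set zs \<subseteq> V"
  shows "f (map Inr zs) = Inr (restrict_op f zs) \<and> restrict_op f zs \<in> V"
proof -
  have in_ext: "length (map Inr zs) = k" "set (map Inr zs) \<subseteq> ext_V i j V"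
    using zs by auto
  then have mem: "f (map Inr zs) \<in> ext_V i j V" using f unfolding polymorphism_def by blast
  have "f (map Inr zs) \<noteq> Inl u" for u
  proof
    assume fu: "f (map Inr zs) = Inl u"
    then have u: "u \<in> int_part i j" using mem by simp
    then have const: "f (replicate k (Inl u)) = Inl u" using idem by (simp add: idempotent_op_def)
    have const_ext: "length (replicate k (Inl u)) = k" "set (replicate k (Inl u)) \<subseteq> ext_V i j V"
      using u by auto
    show False
    proof (cases "u < 0")
      case True
      then have "list_all2 (\<lambda>x y. (x, y) \<in> ext_E i j V E) (replicate k (Inl u)) (map Inr zs)"
        using u zs by (auto simp: list_all2_conv_all_nth)
      then have "(f (replicate k (Inl u)), f (map Inr zs)) \<in> ext_E i j V E"
        using f const_ext in_ext unfolding polymorphism_list_all2 by blast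
      then show False using fu const by simp
    next
      case False
      then have "0 < u" using int_part_nonzero[OF u] by simp
      then have "list_all2 (\<lambda>x y. (x, y) \<in> ext_E i j V E) (map Inr zs) (replicate k (Inl u))"
        using u zs by (auto simp: list_all2_conv_all_nth)
      then have "(f (map Inr zs), f (replicate k (Inl u))) \<in> ext_E i j V E"
        using f const_ext in_ext unfolding polymorphism_list_all2 by blast
      then show False using fu const by simp
    qed
  qed
  then obtain v where "f (map Inr zs) = Inr v" by (meson sum.exhaust)
  then show ?thesis using mem by (simp add: restrict_op_def)
qed

lemma restrict_op_polymorphism:
  assumes f: "polymorphism (ext_V i j V) (ext_E i j V E) k f"
    and idem: "idempotent_op (ext_V i j V) k f"
  shows "polymorphism V E k (restrict_op f)"
  unfolding polymorphism_list_all2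
proof (intro conjI allI impI)
  show "restrict_op f zs \<in> V" if "length zs = k \<and> set zs \<subseteq> V" for zs
    using idempotent_polymorphism_ext_map_Inr[OF f idem] that by blast
  show "(restrict_op f zs, restrict_op f zs') \<in> E"
    if zs: "length zs = k \<and> set zs \<subseteq> V \<and> set zs' \<subseteq> V \<and> list_all2 (\<lambda>x y. (x, y) \<in> E) zs zs'"
    for zs zs'
  proof -
    have "length zs' = k" using zs list_all2_lengthD by metis
    then have "f (map Inr zs) = Inr (restrict_op f zs)" "f (map Inr zs') = Inr (restrict_op f zs')"
      using idempotent_polymorphism_ext_map_Inr[OF f idem] zs by blast+
    moreover have "(f (map Inr zs), f (map Inr zs')) \<in> ext_E i j V E"
      using f zs unfolding polymorphism_list_all2
      by (simp add: list_all2_map1 list_all2_map2)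
    ultimately show ?thesis by simp
  qed
qed

lemma restrict_op_idempotent:
  assumes "idempotent_op (ext_V i j V) k f"
  shows "idempotent_op V k (restrict_op f)"
  using assms unfolding idempotent_op_def restrict_op_def by (simp add: map_replicate)

lemma weak_nu_restrict_op:
  assumes "weak_nu (ext_V i j V) (ext_E i j V E) n f"
  shows "weak_nu V E n (restrict_op f)"
proof -
  have n: "1 < n" and f: "polymorphism (ext_V i j V) (ext_E i j V E) n f"
    "idempotent_op (ext_V i j V) n f"
    and f_nu: "\<forall>x\<in>ext_V i j V. \<forall>y\<in>ext_V i j V. \<forall>p<n. \<forall>q<n.
                 f ((replicate n x)[p := y]) = f ((replicate n x)[q := y])"
    using assms unfolding weak_nu_def by blast+
  have "\<forall>a\<in>V. \<forall>b\<in>V. \<forall>p<n. \<forall>q<n.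
          restrict_op f ((replicate n a)[p := b]) = restrict_op f ((replicate n a)[q := b])"
  proof (intro ballI allI impI)
    fix a b p q assume "a \<in> V" "b \<in> V" "p < n" "q < n"
    then have "f ((replicate n (Inr a))[p := Inr b]) = f ((replicate n (Inr a))[q := Inr b])"
      by (intro f_nu[rule_format]) simp_all
    then show "restrict_op f ((replicate n a)[p := b]) = restrict_op f ((replicate n a)[q := b])"
      by (simp add: restrict_op_def map_update)
  qed
  then show ?thesis
    using n restrict_op_polymorphism[OF f] restrict_op_idempotent[OF f(2)]
    unfolding weak_nu_def by blast
qed

lemma SD_meet_restrict:
  assumes "SD_meet (ext_V i j V) (ext_E i j V E)"
  shows "SD_meet V E"
proof -
  obtain w1 w2 where w: "weak_nu (ext_V i j V) (ext_E i j V E) 3 w1"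
      "weak_nu (ext_V i j V) (ext_E i j V E) 4 w2"
    and w_eq: "\<forall>x\<in>ext_V i j V. \<forall>y\<in>ext_V i j V. w1 [y, x, x] = w2 [y, x, x, x]"
    using assms unfolding SD_meet_def by blast
  have "\<forall>a\<in>V. \<forall>b\<in>V. restrict_op w1 [b, a, a] = restrict_op w2 [b, a, a, a]"
    using w_eq by (simp add: restrict_op_def)
  then show ?thesis using weak_nu_restrict_op[OF w(1)] weak_nu_restrict_op[OF w(2)]
    unfolding SD_meet_def by blast
qed

lemma two_semilattice_pol_restrict_op:
  assumes "two_semilattice_pol (ext_V i j V) (ext_E i j V E) m"
  shows "two_semilattice_pol V E (restrict_op m)"
proof -
  have m: "polymorphism (ext_V i j V) (ext_E i j V E) 2 m" "idempotent_op (ext_V i j V) 2 m"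
    and m_eq: "\<forall>x\<in>ext_V i j V. \<forall>y\<in>ext_V i j V. m [x, y] = m [y, x] \<and> m [x, m [x, y]] = m [x, y]"
    using assms unfolding two_semilattice_pol_def by blast+
  have "\<forall>a\<in>V. \<forall>b\<in>V. restrict_op m [a, b] = restrict_op m [b, a] \<and>
          restrict_op m [a, restrict_op m [a, b]] = restrict_op m [a, b]"
  proof (intro ballI)
    fix a b assume ab: "a \<in> V" "b \<in> V"
    have ab_Inr: "m [Inr a, Inr b] = Inr (restrict_op m [a, b])"
      and ba_Inr: "m [Inr b, Inr a] = Inr (restrict_op m [b, a])"
      using idempotent_polymorphism_ext_map_Inr[OF m, of "[a, b]"]
        idempotent_polymorphism_ext_map_Inr[OF m, of "[b, a]"] ab by simp_all
    have "Inr a \<in> ext_V i j V" "Inr b \<in> ext_V i j V" using ab by simp_all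
    then have comm: "m [Inr a, Inr b] = m [Inr b, Inr a]"
      and absorb: "m [Inr a, m [Inr a, Inr b]] = m [Inr a, Inr b]"
      using m_eq by blast+
    have "restrict_op m [a, restrict_op m [a, b]] = projr (m [Inr a, Inr (restrict_op m [a, b])])"
      by (simp add: restrict_op_def)
    also have "\<dots> = projr (m [Inr a, Inr b])" by (simp only: ab_Inr[symmetric] absorb)
    also have "\<dots> = restrict_op m [a, b]" by (simp add: restrict_op_def)
    finally show "restrict_op m [a, b] = restrict_op m [b, a] \<and>
          restrict_op m [a, restrict_op m [a, b]] = restrict_op m [a, b]"
      using comm unfolding ab_Inr ba_Inr by simp
  qed
  then show ?thesis
    using restrict_op_polymorphism[OF m] restrict_op_idempotent[OF m(2)]
    unfolding two_semilattice_pol_def by blast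
qed

lemma tsi_pol_restrict_op:
  assumes "tsi_pol (ext_V i j V) (ext_E i j V E) n p"
  shows "tsi_pol V E n (restrict_op p)"
proof -
  have p: "polymorphism (ext_V i j V) (ext_E i j V E) n p" "idempotent_op (ext_V i j V) n p"
    and p_sym: "\<forall>xs ys. length xs = n \<and> length ys = n \<and> set xs \<subseteq> ext_V i j V \<and>
                  set ys \<subseteq> ext_V i j V \<and> set xs = set ys \<longrightarrow> p xs = p ys"
    using assms unfolding tsi_pol_def by blast+
  have "\<forall>zs zs'. length zs = n \<and> length zs' = n \<and> set zs \<subseteq> V \<and> set zs' \<subseteq> V \<and>
          set zs = set zs' \<longrightarrow> restrict_op p zs = restrict_op p zs'"
  proof (intro allI impI)
    fix zs zs' :: "'a list"
    assume "length zs = n \<and> length zs' = n \<and> set zs \<subseteq> V \<and> set zs' \<subseteq> V \<and> set zs = set zs'"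
    then have "length (map Inr zs) = n" "length (map Inr zs') = n"
      "set (map Inr zs) \<subseteq> ext_V i j V" "set (map Inr zs') \<subseteq> ext_V i j V"
      "set (map Inr zs) = set (map Inr zs')"
      by auto
    then have "p (map Inr zs) = p (map Inr zs')" using p_sym by blast
    then show "restrict_op p zs = restrict_op p zs'" by (simp add: restrict_op_def)
  qed
  then show ?thesis
    using restrict_op_polymorphism[OF p] restrict_op_idempotent[OF p(2)]
    unfolding tsi_pol_def by blast
qed

lemma taylor_ext_iff: "taylor (ext_V i j V) (ext_E i j V E) \<longleftrightarrow> taylor V E"
  unfolding taylor_def using weak_nu_ext_op weak_nu_restrict_op by blast

lemma SD_meet_ext_iff: "SD_meet (ext_V i j V) (ext_E i j V E) \<longleftrightarrow> SD_meet V E"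
  using SD_meet_ext SD_meet_restrict by blast

lemma has_2_semilattice_ext_iff:
  "has_2_semilattice (ext_V i j V) (ext_E i j V E) \<longleftrightarrow> has_2_semilattice V E"
  unfolding has_2_semilattice_def using two_semilattice_pol_ext_op two_semilattice_pol_restrict_op
  by blast

lemma has_all_tsi_ext_iff: "has_all_tsi (ext_V i j V) (ext_E i j V E) \<longleftrightarrow> has_all_tsi V E"
  unfolding has_all_tsi_def using tsi_pol_ext_op tsi_pol_restrict_op by blast

theorem corollary4p8:
  fixes V :: "'a set" and E :: "('a \<times> 'a) set" and i j :: int
  assumes "digraph V E" and "i \<le> 0" and "0 \<le> j"
  shows "(taylor V E \<longleftrightarrow> taylor (ext_V i j V) (ext_E i j V E))
       \<and> (SD_meet V E \<longleftrightarrow> SD_meet (ext_V i j V) (ext_E i j V E))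
       \<and> (has_2_semilattice V E \<longleftrightarrow> has_2_semilattice (ext_V i j V) (ext_E i j V E))
       \<and> (has_all_tsi V E \<longleftrightarrow> has_all_tsi (ext_V i j V) (ext_E i j V E))"
  by (simp add: taylor_ext_iff SD_meet_ext_iff has_2_semilattice_ext_iff has_all_tsi_ext_iff)

end
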